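(* Let $N\ge1$, $k\in\mathbb{Z}$, and let $\psi$ be a Dirichlet character modulo $N$ with $\psi(-1)=(-1)^k$, induced by a primitive character of conductor $N^*\mid N$. Then the number of $\Gamma_0(N)$-inequivalent cusps of $\Gamma_0(N)$ that are singular for $\psi$ equals \[ \sum_{\substack{f\mid N\\ (f,N/f)\mid \frac{N}{N^*}}}\varphi\big((f,N/f)\big). \]
   Context: For $\gamma=\begin{pmatrix}a&b\\c&d\end{pmatrix}\in\Gamma_0(N)$ write $\psi(\gamma)=\psi(d)$. For a cusp $\mathfrak{a}$ of $\Gamma_0(N)$ with stabilizer $\Gamma_{\mathfrak a}$, choose $\sigma_{\mathfrak a}\in SL_2(\mathbb{R})$ with $\sigma_{\mathfrak a}\infty=\mathfrak a$ and $\sigma_{\mathfrak a}^{-1}\Gamma_{\mathfrak a}\sigma_{\mathfrak a}=\{\pm\begin{pmatrix}1&n\\0&1\end{pmatrix}\}$, and let $\tau_{\mathfrak a}=\sigma_{\mathfrak a}\begin{pmatrix}1&1\\0&1\end{pmatrix}\sigma_{\mathfrak a}^{-1}$. The cusp $\mathfrak a$ is singular for $\psi$ if $\psi(\tau_{\mathfrak a})=1$ (this depends only on the $\Gamma_0(N)$-class of $\mathfrak a$). $\varphi$ is Euler's function. *)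

theory Defs
  imports Complex_Main "HOL-Number_Theory.Number_Theory"
begin

definition dirichlet_char :: "nat \<Rightarrow> (int \<Rightarrow> complex) \<Rightarrow> bool" where
  "dirichlet_char M \<chi> \<longleftrightarrow> M \<ge> 1 \<and>
     (\<forall>n. \<chi> (n + int M) = \<chi> n) \<and>
     (\<forall>m n. \<chi> (m * n) = \<chi> m * \<chi> n) \<and>
     \<chi> 1 = 1 \<and>
     (\<forall>n. \<chi> n = 0 \<longleftrightarrow> \<not> coprime n (int M))"

definition primitive_char :: "nat \<Rightarrow> (int \<Rightarrow> complex) \<Rightarrow> bool" where
  "primitive_char M \<chi> \<longleftrightarrow> dirichlet_char M \<chi> \<and>
     \<not> (\<exists>d. d dvd M \<and> d < M \<and>
           (\<forall>n. coprime n (int M) \<and> [n = 1] (mod int d) \<longrightarrow> \<chi> n = 1))"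

definition induced_by_primitive :: "nat \<Rightarrow> (int \<Rightarrow> complex) \<Rightarrow> nat \<Rightarrow> bool" where
  "induced_by_primitive N \<chi> Nstar \<longleftrightarrow> Nstar dvd N \<and>
     (\<exists>\<chi>'. primitive_char Nstar \<chi>' \<and>
        (\<forall>n. \<chi> n = (if coprime n (int N) then \<chi>' n else 0)))"

type_synonym mat2 = "real \<times> real \<times> real \<times> real"

fun mmul :: "mat2 \<Rightarrow> mat2 \<Rightarrow> mat2" where
  "mmul (a,b,c,d) (a',b',c',d') = (a*a' + b*c', a*b' + b*d', c*a' + d*c', c*b' + d*d')"

fun mdet :: "mat2 \<Rightarrow> real" where
  "mdet (a,b,c,d) = a*d - b*c"

text \<open>Inverse of a determinant-one matrix.\<close>
fun minv :: "mat2 \<Rightarrow> mat2" where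
  "minv (a,b,c,d) = (d, -b, -c, a)"

definition SL2R :: "mat2 set" where
  "SL2R = {M. mdet M = 1}"

text \<open>Points of the extended real line: None is infinity.\<close>
fun mob :: "mat2 \<Rightarrow> real option \<Rightarrow> real option" where
  "mob (a,b,c,d) None = (if c = 0 then None else Some (a / c))"
| "mob (a,b,c,d) (Some x) = (if c * x + d = 0 then None else Some ((a*x + b) / (c*x + d)))"

definition Gamma0 :: "nat \<Rightarrow> mat2 set" where
  "Gamma0 N = {M. \<exists>a b c d :: int. M = (of_int a, of_int b, of_int c, of_int d) \<and>
                   a*d - b*c = 1 \<and> int N dvd c}"

definition Tmat :: mat2 where "Tmat = (1, 1, 0, 1)"

text \<open>psi(gamma) = psi(d) for gamma = (a,b,c,d) in Gamma0(N).\<close>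
definition psi_mat :: "(int \<Rightarrow> complex) \<Rightarrow> mat2 \<Rightarrow> complex" where
  "psi_mat \<psi> M = \<psi> \<lfloor>snd (snd (snd M))\<rfloor>"

text \<open>Cusps: points of P^1(Q), i.e. infinity or rationals.\<close>
definition is_cusp :: "real option \<Rightarrow> bool" where
  "is_cusp z \<longleftrightarrow> z = None \<or> (\<exists>r\<in>\<rat>. z = Some r)"

definition cusp_equiv :: "nat \<Rightarrow> real option \<Rightarrow> real option \<Rightarrow> bool" where
  "cusp_equiv N z w \<longleftrightarrow> (\<exists>\<gamma>\<in>Gamma0 N. mob \<gamma> z = w)"

definition stabilizer :: "nat \<Rightarrow> real option \<Rightarrow> mat2 set" where
  "stabilizer N z = {\<gamma>\<in>Gamma0 N. mob \<gamma> z = z}"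

definition scaling_matrix :: "nat \<Rightarrow> real option \<Rightarrow> mat2 \<Rightarrow> bool" where
  "scaling_matrix N z \<sigma> \<longleftrightarrow> \<sigma> \<in> SL2R \<and> mob \<sigma> None = z \<and>
     (\<lambda>\<gamma>. mmul (minv \<sigma>) (mmul \<gamma> \<sigma>)) ` stabilizer N z =
       {(1, of_int n, 0, 1) | n. True} \<union> {(-1, - of_int n, 0, -1) | n. True}"

definition tau :: "mat2 \<Rightarrow> mat2" where
  "tau \<sigma> = mmul \<sigma> (mmul Tmat (minv \<sigma>))"

definition singular_cusp :: "nat \<Rightarrow> (int \<Rightarrow> complex) \<Rightarrow> real option \<Rightarrow> bool" where
  "singular_cusp N \<psi> z \<longleftrightarrow> (\<exists>\<sigma>. scaling_matrix N z \<sigma> \<and> psi_mat \<psi> (tau \<sigma>) = 1)"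

definition singular_cusp_classes :: "nat \<Rightarrow> (int \<Rightarrow> complex) \<Rightarrow> real option set set" where
  "singular_cusp_classes N \<psi> =
     {{w. cusp_equiv N z w} | z. is_cusp z \<and> singular_cusp N \<psi> z}"

end

theory Submission
  imports Defs
begin

text \<open>Every cusp is \<open>\<Gamma>\<^sub>0(N)\<close>-equivalent to some \<open>a/c\<close> with \<open>a, c\<close> coprime, and its class is
  determined by \<open>f = (c, N)\<close> together with the residue of \<open>a c/f\<close> modulo \<open>g = (f, N/f)\<close>, which
  is a unit; conversely every such pair \<open>(f, u)\<close> occurs. The stabilizer of \<open>a/c\<close> consists of
  the parabolic matrices \<open>\<plusminus>1 + n (-ac, a\<^sup>2; -c\<^sup>2, ac)\<close> with \<open>h | n\<close>, where
  \<open>h = N/(c\<^sup>2, N)\<close> is the width, so \<open>\<psi>(\<tau>) = \<psi>(1 + hac) = \<psi>(1 + (N/g) w)\<close> with \<open>w\<close> a unit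
  modulo \<open>g\<close>. As \<open>N | (N/g)\<^sup>2\<close>, the map \<open>t \<mapsto> \<psi>(1 + (N/g) t)\<close> is a character of \<open>\<int>/g\<close>, and by
  primitivity it is trivial exactly when \<open>N\<^sup>* | N/g\<close>, i.e. when \<open>g | N/N\<^sup>*\<close>. Counting the
  pairs \<open>(f, u)\<close> gives the sum.\<close>

section \<open>Homogeneous coordinates and the Moebius action\<close>

definition proj_point :: "real \<Rightarrow> real \<Rightarrow> real option" where
  "proj_point x y = (if y = 0 then None else Some (x / y))"

lemma mob_proj_point:
  assumes "x \<noteq> 0 \<or> y \<noteq> 0"
  shows "mob (p,q,r,s) (proj_point x y) = proj_point (p*x + q*y) (r*x + s*y)"
proof (cases "y = 0")
  case True
  then show ?thesis using assms by (auto simp: proj_point_def)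
next
  case False
  have "r * x / y + s = (r*x + s*y) / y" "p * x / y + q = (p*x + q*y) / y"
    using False by (simp_all add: field_simps)
  then show ?thesis using False by (auto simp: proj_point_def)
qed

lemma proj_point_cases:
  obtains x y where "x \<noteq> 0 \<or> y \<noteq> 0" "z = proj_point x y"
proof (cases z)
  case None
  then show ?thesis using that[of 1 0] by (simp add: proj_point_def)
next
  case (Some t)
  then show ?thesis using that[of t 1] by (simp add: proj_point_def)
qed

lemma proj_point_scale: "t \<noteq> 0 \<Longrightarrow> proj_point (t*x) (t*y) = proj_point x y"
  by (simp add: proj_point_def)

lemma mmul_assoc: "mmul A (mmul B C) = mmul (mmul A B) C"
  by (cases A; cases B; cases C) (simp add: algebra_simps)

lemma mmul_id_left [simp]: "mmul (1,0,0,1) A = A"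
  by (cases A) simp

lemma mmul_id_right [simp]: "mmul A (1,0,0,1) = A"
  by (cases A) simp

lemma minv_mmul: "mdet A = 1 \<Longrightarrow> mmul (minv A) A = (1,0,0,1)"
  by (cases A) (simp add: algebra_simps)

lemma mmul_minv: "mdet A = 1 \<Longrightarrow> mmul A (minv A) = (1,0,0,1)"
  by (cases A) (simp add: algebra_simps)

lemma mob_id [simp]: "mob (1,0,0,1) z = z"
  by (cases z) auto

lemma mob_mmul:
  assumes "mdet B \<noteq> 0"
  shows "mob (mmul A B) z = mob A (mob B z)"
proof -
  obtain x y where xy: "x \<noteq> 0 \<or> y \<noteq> 0" "z = proj_point x y" by (rule proj_point_cases)
  obtain p q r s where B: "B = (p,q,r,s)" by (cases B) auto
  obtain p' q' r' s' where A: "A = (p',q',r',s')" by (cases A) auto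
  have det: "p*s - q*r \<noteq> 0" using assms B by simp
  have "p*x + q*y \<noteq> 0 \<or> r*x + s*y \<noteq> 0"
  proof (rule ccontr)
    assume "\<not> ?thesis"
    then have h1: "p*x + q*y = 0" and h2: "r*x + s*y = 0" by auto
    have "(p*s - q*r) * x = s*(p*x + q*y) - q*(r*x + s*y)"
      "(p*s - q*r) * y = p*(r*x + s*y) - r*(p*x + q*y)" by (simp_all add: algebra_simps)
    then have "(p*s - q*r) * x = 0" "(p*s - q*r) * y = 0" using h1 h2 by simp_all
    then have "x = 0" "y = 0" using det by simp_all
    then show False using xy(1) by simp
  qed
  then show ?thesis unfolding xy(2) A B
    using xy(1) by (simp add: mob_proj_point algebra_simps)
qed

section \<open>The group \<open>\<Gamma>\<^sub>0(N)\<close> and equivalence of cusps\<close>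

definition int_mat :: "int \<Rightarrow> int \<Rightarrow> int \<Rightarrow> int \<Rightarrow> mat2" where
  "int_mat p q r s = (of_int p, of_int q, of_int r, of_int s)"

lemma mmul_int_mat:
  "mmul (int_mat a b c d) (int_mat a' b' c' d') =
     int_mat (a*a' + b*c') (a*b' + b*d') (c*a' + d*c') (c*b' + d*d')"
  by (simp add: int_mat_def)

lemma minv_int_mat: "minv (int_mat a b c d) = int_mat d (-b) (-c) a"
  by (simp add: int_mat_def)

lemma Gamma0_int_mat: "p*s - q*r = 1 \<Longrightarrow> int N dvd r \<Longrightarrow> int_mat p q r s \<in> Gamma0 N"
  unfolding Gamma0_def int_mat_def by blast

lemma Gamma0_E:
  assumes "\<gamma> \<in> Gamma0 N"
  obtains p q r s where "\<gamma> = int_mat p q r s" "p*s - q*r = 1" "int N dvd r"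
  using assms unfolding Gamma0_def int_mat_def by (auto simp: algebra_simps)

lemma Gamma0_det: "\<gamma> \<in> Gamma0 N \<Longrightarrow> mdet \<gamma> = 1"
  by (erule Gamma0_E) (simp add: int_mat_def flip: of_int_mult of_int_diff)

lemma Gamma0_id: "(1,0,0,1) \<in> Gamma0 N"
  using Gamma0_int_mat[of 1 1 0 0 N] by (simp add: int_mat_def)

lemma Gamma0_mmul:
  assumes "A \<in> Gamma0 N" "B \<in> Gamma0 N"
  shows "mmul A B \<in> Gamma0 N"
proof -
  obtain a b c d where A: "A = int_mat a b c d" "a*d - b*c = 1" "int N dvd c"
    using assms(1) by (rule Gamma0_E)
  obtain a' b' c' d' where B: "B = int_mat a' b' c' d'" "a'*d' - b'*c' = 1" "int N dvd c'"
    using assms(2) by (rule Gamma0_E)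
  have "(a*a' + b*c')*(c*b' + d*d') - (a*b' + b*d')*(c*a' + d*c') = (a*d - b*c)*(a'*d' - b'*c')"
    by (simp add: algebra_simps)
  then show ?thesis
    using A B by (auto simp: mmul_int_mat intro!: Gamma0_int_mat)
qed

lemma Gamma0_minv: "A \<in> Gamma0 N \<Longrightarrow> minv A \<in> Gamma0 N"
  by (erule Gamma0_E) (auto simp: minv_int_mat algebra_simps intro!: Gamma0_int_mat)

lemma cusp_equiv_refl: "cusp_equiv N z z"
  unfolding cusp_equiv_def using Gamma0_id mob_id by blast

lemma cusp_equiv_sym: "cusp_equiv N z w \<Longrightarrow> cusp_equiv N w z"
  unfolding cusp_equiv_def
proof clarify
  fix \<gamma> assume g: "\<gamma> \<in> Gamma0 N"
  have "mob (minv \<gamma>) (mob \<gamma> z) = mob (mmul (minv \<gamma>) \<gamma>) z"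
    using Gamma0_det[OF g] by (simp add: mob_mmul)
  also have "\<dots> = z" using Gamma0_det[OF g] by (simp add: minv_mmul)
  finally show "\<exists>\<gamma>'\<in>Gamma0 N. mob \<gamma>' (mob \<gamma> z) = z" using Gamma0_minv[OF g] by blast
qed

lemma cusp_equiv_trans: "cusp_equiv N z w \<Longrightarrow> cusp_equiv N w v \<Longrightarrow> cusp_equiv N z v"
  unfolding cusp_equiv_def
proof clarify
  fix \<gamma> \<delta> assume g: "\<gamma> \<in> Gamma0 N" and d: "\<delta> \<in> Gamma0 N"
  have "mob (mmul \<delta> \<gamma>) z = mob \<delta> (mob \<gamma> z)"
    using Gamma0_det[OF g] by (simp add: mob_mmul)
  then show "\<exists>\<gamma>'\<in>Gamma0 N. mob \<gamma>' z = mob \<delta> (mob \<gamma> z)" using Gamma0_mmul[OF d g] by blast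
qed

lemma cusp_class_eq: "cusp_equiv N z w \<Longrightarrow> {v. cusp_equiv N z v} = {v. cusp_equiv N w v}"
  using cusp_equiv_sym cusp_equiv_trans by blast

section \<open>Cusps in coprime integral coordinates\<close>

definition int_cusp :: "int \<Rightarrow> int \<Rightarrow> real option" where
  "int_cusp a c = proj_point (of_int a) (of_int c)"

lemma mob_int_cusp:
  "a \<noteq> 0 \<or> c \<noteq> 0 \<Longrightarrow> mob (int_mat p q r s) (int_cusp a c) = int_cusp (p*a + q*c) (r*a + s*c)"
  unfolding int_mat_def int_cusp_def by (subst mob_proj_point) auto

lemma int_cusp_scale: "e \<noteq> 0 \<Longrightarrow> int_cusp (e*a) (e*c) = int_cusp a c"
  unfolding int_cusp_def using proj_point_scale[of "of_int e"] by simp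

lemma is_cusp_int_cusp: "is_cusp (int_cusp a c)"
  unfolding is_cusp_def int_cusp_def proj_point_def by auto

lemma is_cusp_E:
  assumes "is_cusp z"
  obtains a c where "coprime a c" "z = int_cusp a c"
proof -
  consider "z = None" | r where "r \<in> \<rat>" "z = Some r"
    using assms unfolding is_cusp_def by blast
  then show ?thesis
  proof cases
    case 1
    then show ?thesis using that[of 1 0] by (simp add: int_cusp_def proj_point_def)
  next
    case 2
    then obtain a b where "b > 0" "coprime a b" "z = Some (of_int a / of_int b)"
      using Rats_cases' by metis
    then show ?thesis using that[of a b] by (simp add: int_cusp_def proj_point_def)
  qed
qed

lemma coprime_of_det:
  fixes a b c d :: int
  assumes "a*d - b*c = 1"
  shows "coprime a c"
proof (rule coprimeI)
  fix k assume "k dvd a" "k dvd c"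
  then have "k dvd a*d - b*c" by simp
  then show "is_unit k" using assms by simp
qed

lemma det_of_coprime:
  fixes a c :: int
  assumes "coprime a c"
  obtains b d where "a*d - b*c = 1"
proof -
  obtain u v where "u*a + v*c = gcd a c" using bezout_int by blast
  then have "a*u - (-v)*c = 1" using assms by (simp add: algebra_simps)
  then show ?thesis using that by blast
qed

lemma coprime_mat_image:
  fixes p q r s a c :: int
  assumes "p*s - q*r = 1" "coprime a c"
  shows "coprime (p*a + q*c) (r*a + s*c)"
proof (rule coprimeI)
  fix k assume k1: "k dvd p*a + q*c" and k2: "k dvd r*a + s*c"
  have "k dvd s*(p*a + q*c) - q*(r*a + s*c)" "k dvd p*(r*a + s*c) - r*(p*a + q*c)"
    using k1 k2 by simp_all
  moreover have "s*(p*a + q*c) - q*(r*a + s*c) = (p*s - q*r)*a"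
    "p*(r*a + s*c) - r*(p*a + q*c) = (p*s - q*r)*c"
    by (simp_all add: algebra_simps)
  ultimately have "k dvd a" "k dvd c" using assms(1) by simp_all
  then show "is_unit k" using coprime_common_divisor[OF assms(2)] by blast
qed

lemma int_cusp_eq:
  fixes a c a' c' :: int
  assumes cop: "coprime a c" "coprime a' c'" and eq: "int_cusp a c = int_cusp a' c'"
  shows "(a' = a \<and> c' = c) \<or> (a' = -a \<and> c' = -c)"
proof (cases "c = 0")
  case True
  then have "c' = 0" using eq by (auto simp: int_cusp_def proj_point_def split: if_splits)
  moreover have "is_unit a" "is_unit a'" using cop True \<open>c' = 0\<close> by simp_all
  ultimately show ?thesis using True by auto
next
  case False
  then have c': "c' \<noteq> 0" using eq by (auto simp: int_cusp_def proj_point_def split: if_splits)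
  have "of_int a / of_int c = (of_int a' / of_int c' :: real)"
    using eq False c' by (simp add: int_cusp_def proj_point_def)
  then have "of_int (a * c') = (of_int (a' * c) :: real)" using False c' by (simp add: field_simps)
  then have ac: "a * c' = a' * c" by linarith
  then have "c dvd a * c'" "c' dvd a' * c" by (simp, metis dvd_triv_right)
  then have "c dvd c'" "c' dvd c" using cop by (simp_all add: coprime_commute coprime_dvd_mult_right_iff)
  then have "\<bar>c'\<bar> = \<bar>c\<bar>" using zdvd_antisym_abs by blast
  then have "c' = c \<or> c' = -c" by auto
  moreover have "a' = -a" if "c' = -c"
    using ac False that by (metis mult_minus_left mult_minus_right mult_right_cancel)
  ultimately show ?thesis using ac False by auto
qed

section \<open>Stabilizers and cusp widths\<close>

definition cusp_width :: "nat \<Rightarrow> int \<Rightarrow> int" where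
  "cusp_width N c = int N div gcd (c^2) (int N)"

lemma cusp_width_mult: "int N = gcd (c^2) (int N) * cusp_width N c"
  by (simp add: cusp_width_def)

lemma cusp_width_pos:
  assumes "N \<ge> 1" shows "cusp_width N c > 0"
proof -
  have "0 < gcd (c^2) (int N) * cusp_width N c" using cusp_width_mult[of N c] assms by simp
  moreover have "gcd (c^2) (int N) > 0" using assms by simp
  ultimately show ?thesis by (simp add: zero_less_mult_iff)
qed

lemma cusp_width_dvd_iff:
  assumes "N \<ge> 1"
  shows "int N dvd n * c^2 \<longleftrightarrow> cusp_width N c dvd n"
proof -
  define e where "e = gcd (c^2) (int N)"
  have e0: "e > 0" using assms by (simp add: e_def)
  have N: "int N = e * cusp_width N c" unfolding e_def by (rule cusp_width_mult)
  obtain k where k: "c^2 = e * k" unfolding e_def by (meson gcd_dvd1 dvd_def)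
  have "coprime (c^2 div e) (int N div e)" unfolding e_def
    by (rule div_gcd_coprime) (use assms in auto)
  moreover have "c^2 div e = k" "int N div e = cusp_width N c" using k N e0 by simp_all
  ultimately have cop: "coprime (cusp_width N c) k" by (simp add: coprime_commute)
  have "int N dvd n * c^2 \<longleftrightarrow> e * cusp_width N c dvd e * (n * k)" using N k by (simp add: algebra_simps)
  also have "\<dots> \<longleftrightarrow> cusp_width N c dvd n" using e0 cop by (simp add: coprime_dvd_mult_left_iff)
  finally show ?thesis .
qed

definition parabolic :: "int \<Rightarrow> int \<Rightarrow> int \<Rightarrow> int \<Rightarrow> mat2" where
  "parabolic a c e n = int_mat (e - n*a*c) (n*a^2) (-(n*c^2)) (e + n*a*c)"

lemma parabolic_real:
  "parabolic a c e n = (of_int e - of_int n * of_int a * of_int c, of_int n * (of_int a)^2,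
     -(of_int n * (of_int c)^2), of_int e + of_int n * of_int a * of_int c)"
  by (simp add: parabolic_def int_mat_def)

text \<open>\<open>n\<close> is the upper right entry of the conjugate of \<open>(p, q; r, s)\<close> by \<open>(a, b; c, d)\<close>.\<close>
lemma parabolic_if_fixes_column:
  fixes p q r s a b c d e :: int
  assumes h1: "p*a + q*c = e*a" and h2: "r*a + s*c = e*c" and h3: "a*d - b*c = 1"
    and h4: "p*s - q*r = 1" and h5: "e*e = 1"
  defines "n \<equiv> d*(p*b + q*d) - b*(r*b + s*d)"
  shows "p = e - n*a*c \<and> q = n*a^2 \<and> r = -(n*c^2) \<and> s = e + n*a*c"
proof -
  define \<beta> where "\<beta> = a*(r*b + s*d) - c*(p*b + q*d)"
  have "(p*a + q*c)*(r*b + s*d) - (r*a + s*c)*(p*b + q*d) = (p*s - q*r)*(a*d - b*c)"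
    by (simp add: algebra_simps)
  then have "e*\<beta> = 1" unfolding \<beta>_def h1 h2 h3 h4 by (simp add: algebra_simps)
  then have b: "\<beta> = e" using h5 by (metis mult.left_neutral mult.assoc mult.commute)
  have "n*a + \<beta>*b = (p*b + q*d)*(a*d - b*c)" "n*c + \<beta>*d = (r*b + s*d)*(a*d - b*c)"
    unfolding n_def \<beta>_def by (simp_all add: algebra_simps)
  then have u1: "p*b + q*d = n*a + e*b" and u2: "r*b + s*d = n*c + e*d" using b h3 by simp_all
  have "p*(a*d - b*c) = d*(p*a + q*c) - c*(p*b + q*d)" "q*(a*d - b*c) = a*(p*b + q*d) - b*(p*a + q*c)"
    "r*(a*d - b*c) = d*(r*a + s*c) - c*(r*b + s*d)" "s*(a*d - b*c) = a*(r*b + s*d) - b*(r*a + s*c)"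
    by (simp_all add: algebra_simps)
  moreover have "a*(d*e) = e + b*(c*e)"
    using arg_cong[OF h3, of "\<lambda>t. e * t"] by (simp add: algebra_simps)
  ultimately show ?thesis unfolding h1 h2 u1 u2 h3
    by (simp add: algebra_simps power2_eq_square)
qed

lemma stabilizer_int_cusp:
  assumes N1: "N \<ge> 1" and ad: "a*d - b*c = 1"
  shows "stabilizer N (int_cusp a c) =
    {parabolic a c e n | e n. (e = 1 \<or> e = -1) \<and> cusp_width N c dvd n}"
proof (intro equalityI subsetI)
  have cop: "coprime a c" using coprime_of_det[OF ad] .
  then have nz: "a \<noteq> 0 \<or> c \<noteq> 0" by auto
  {
    fix \<gamma> assume "\<gamma> \<in> stabilizer N (int_cusp a c)"
    then have g: "\<gamma> \<in> Gamma0 N" and fx: "mob \<gamma> (int_cusp a c) = int_cusp a c"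
      by (auto simp: stabilizer_def)
    obtain p q r s where gp: "\<gamma> = int_mat p q r s" "p*s - q*r = 1" "int N dvd r"
      using g by (rule Gamma0_E)
    have "int_cusp (p*a + q*c) (r*a + s*c) = int_cusp a c" using fx gp(1) mob_int_cusp[OF nz] by simp
    then have "(a = p*a + q*c \<and> c = r*a + s*c) \<or> (a = -(p*a + q*c) \<and> c = -(r*a + s*c))"
      using int_cusp_eq[OF coprime_mat_image[OF gp(2) cop] cop] by blast
    then obtain e :: int where e: "e = 1 \<or> e = -1" "p*a + q*c = e*a" "r*a + s*c = e*c"
      by (metis mult_1 mult_minus1 minus_minus)
    have "e*e = 1" using e(1) by auto
    from parabolic_if_fixes_column[OF e(2,3) ad gp(2) this] obtain n where
      form: "p = e - n*a*c" "q = n*a^2" "r = -(n*c^2)" "s = e + n*a*c" by blast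
    have "cusp_width N c dvd n" using gp(3) form(3) cusp_width_dvd_iff[OF N1] by simp
    then show "\<gamma> \<in> {parabolic a c e n | e n. (e = 1 \<or> e = -1) \<and> cusp_width N c dvd n}"
      using e(1) gp(1) form unfolding parabolic_def by blast
  }
  fix \<gamma> assume "\<gamma> \<in> {parabolic a c e n | e n. (e = 1 \<or> e = -1) \<and> cusp_width N c dvd n}"
  then obtain e n where en: "\<gamma> = parabolic a c e n" "e = 1 \<or> e = -1" "cusp_width N c dvd n"
    by blast
  have "e*e = 1" using en(2) by auto
  then have det: "(e - n*a*c)*(e + n*a*c) - (n*a^2)*(-(n*c^2)) = 1"
    by (simp add: algebra_simps power2_eq_square)
  have dv: "int N dvd -(n*c^2)" using cusp_width_dvd_iff[OF N1] en(3) by simp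
  have "\<gamma> \<in> Gamma0 N" using Gamma0_int_mat[OF det dv] en(1) by (simp add: parabolic_def)
  moreover have "(e - n*a*c)*a + (n*a^2)*c = e*a" "(-(n*c^2))*a + (e + n*a*c)*c = e*c"
    by (simp_all add: algebra_simps power2_eq_square)
  then have "mob \<gamma> (int_cusp a c) = int_cusp (e*a) (e*c)"
    using en(1) mob_int_cusp[OF nz] by (simp add: parabolic_def)
  moreover have "int_cusp (e*a) (e*c) = int_cusp a c" using en(2) int_cusp_scale[of e a c] by auto
  ultimately show "\<gamma> \<in> stabilizer N (int_cusp a c)" by (simp add: stabilizer_def)
qed

section \<open>Scaling matrices and the generator \<open>\<tau>\<close>\<close>

lemma conj_parabolic:
  fixes l s2 s4 :: real and a c e n :: int
  assumes det: "mdet (l*of_int a, s2, l*of_int c, s4) = 1" and l: "l \<noteq> 0"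
  shows "mmul (minv (l*of_int a, s2, l*of_int c, s4)) (mmul (parabolic a c e n) (l*of_int a, s2, l*of_int c, s4))
       = (of_int e, of_int n / l^2, 0, of_int e)"
proof -
  have d: "l*of_int a*s4 - s2*(l*of_int c) = 1" using det by simp
  then have k: "of_int a*s4 - of_int c*s2 = 1 / l" using l by (simp add: field_simps)
  have "mmul (minv (l*of_int a, s2, l*of_int c, s4)) (mmul (parabolic a c e n) (l*of_int a, s2, l*of_int c, s4))
     = (of_int e*(l*of_int a*s4 - s2*(l*of_int c)), of_int n*(of_int a*s4 - of_int c*s2)^2, 0,
        of_int e*(l*of_int a*s4 - s2*(l*of_int c)))"
    by (simp add: parabolic_real algebra_simps power2_eq_square)
  then show ?thesis using d k by (simp add: power_divide)
qed

lemma tau_formula: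
  fixes s1 s2 s3 s4 :: real
  assumes "s1*s4 - s2*s3 = 1"
  shows "tau (s1,s2,s3,s4) = (1 - s1*s3, s1^2, -(s3^2), 1 + s1*s3)"
proof -
  have "tau (s1,s2,s3,s4) = (s1*s4 - s1*s3 - s2*s3, s1^2, -(s3^2), s1*s4 - s2*s3 + s1*s3)"
    by (simp add: tau_def Tmat_def algebra_simps power2_eq_square)
  then show ?thesis using assms by (simp add: algebra_simps)
qed

lemma conj_stabilizer_int_cusp:
  fixes l s2 s4 :: real and a c :: int
  defines "\<sigma> \<equiv> (l * of_int a, s2, l * of_int c, s4)"
  assumes N1: "N \<ge> 1" and ad: "a*d - b*c = 1" and det: "mdet \<sigma> = 1"
    and l2: "l^2 = of_int (cusp_width N c)"
  shows "(\<lambda>\<gamma>. mmul (minv \<sigma>) (mmul \<gamma> \<sigma>)) ` stabilizer N (int_cusp a c) =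
    {(1, of_int n, 0, 1) | n. True} \<union> {(-1, - of_int n, 0, -1) | n. True}"
    (is "?f ` _ = ?R")
proof (intro equalityI subsetI)
  define h where "h = cusp_width N c"
  have h0: "h > 0" using cusp_width_pos[OF N1] h_def by simp
  then have "l \<noteq> 0" using l2 h_def by auto
  then have conj: "?f (parabolic a c e n) = (of_int e, of_int n / of_int h, 0, of_int e)" for e n
    using conj_parabolic[of l a s2 c s4] det l2 unfolding \<sigma>_def h_def by simp
  {
    fix x assume "x \<in> ?f ` stabilizer N (int_cusp a c)"
    then obtain e n where x: "x = ?f (parabolic a c e n)" "e = 1 \<or> e = -1" "h dvd n"
      unfolding stabilizer_int_cusp[OF N1 ad] h_def by blast
    then obtain m where "n = h * m" by blast
    then have "x = (of_int e, of_int m, 0, of_int e)" using x(1) conj h0 by simp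
    then show "x \<in> ?R" using x(2) by (auto intro: exI[of _ "-m"])
  }
  fix x assume "x \<in> ?R"
  obtain e m where x: "x = (of_int e, of_int m, 0, of_int e)" "e = 1 \<or> e = -1"
  proof -
    obtain m where "x = (1, of_int m, 0, 1) \<or> x = (-1, - of_int m, 0, -1)"
      using \<open>x \<in> ?R\<close> by blast
    then show ?thesis using that[of 1 m] that[of "-1" "-m"] by auto
  qed
  have "parabolic a c e (h*m) \<in> stabilizer N (int_cusp a c)"
    unfolding stabilizer_int_cusp[OF N1 ad] h_def using x(2)
    by (intro CollectI exI[of _ e] exI[of _ "cusp_width N c * m"]) simp
  moreover have "?f (parabolic a c e (h*m)) = x" using conj x(1) h0 by simp
  ultimately show "x \<in> ?f ` stabilizer N (int_cusp a c)" by (metis rev_image_eqI)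
qed

definition scaling_mat :: "nat \<Rightarrow> int \<Rightarrow> int \<Rightarrow> int \<Rightarrow> int \<Rightarrow> mat2" where
  "scaling_mat N a b c d =
     (sqrt (of_int (cusp_width N c)) * of_int a, of_int b / sqrt (of_int (cusp_width N c)),
      sqrt (of_int (cusp_width N c)) * of_int c, of_int d / sqrt (of_int (cusp_width N c)))"

lemma scaling_matrix_scaling_mat:
  assumes N1: "N \<ge> 1" and ad: "a*d - b*c = 1"
  shows "scaling_matrix N (int_cusp a c) (scaling_mat N a b c d)"
proof -
  define l where "l = sqrt (of_int (cusp_width N c))"
  have "l > 0" and l2: "l^2 = of_int (cusp_width N c)"
    using cusp_width_pos[OF N1, of c] by (simp_all add: l_def)
  have \<sigma>: "scaling_mat N a b c d = (l * of_int a, of_int b / l, l * of_int c, of_int d / l)"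
    unfolding scaling_mat_def l_def ..
  have "mdet (scaling_mat N a b c d) = of_int (a*d - b*c)"
    using \<open>l > 0\<close> unfolding \<sigma> by (simp add: field_simps)
  then have det: "mdet (scaling_mat N a b c d) = 1" using ad by simp
  moreover have "mob (scaling_mat N a b c d) None = int_cusp a c"
    unfolding \<sigma> using \<open>l > 0\<close> by (simp add: int_cusp_def proj_point_def)
  ultimately show ?thesis
    using conj_stabilizer_int_cusp[OF N1 ad _ l2] det unfolding scaling_matrix_def SL2R_def \<sigma>
    by simp
qed

lemma mob_infinity_eq_int_cusp:
  assumes cop: "coprime a c" and det: "s1*s4 - s2*s3 = 1"
    and mobs: "mob (s1,s2,s3,s4) None = int_cusp a c"
  obtains l where "l \<noteq> 0" "s1 = l * of_int a" "s3 = l * of_int c"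
proof (cases "c = 0")
  case True
  then have s3: "s3 = 0" using mobs by (auto simp: int_cusp_def proj_point_def split: if_splits)
  have "a = 1 \<or> a = -1" using cop True by auto
  then have "of_int a * of_int a = (1::real)" by auto
  moreover have "s1 \<noteq> 0" using det s3 by auto
  ultimately show ?thesis using s3 True by (intro that[of "s1 * of_int a"]) (auto simp: mult.assoc)
next
  case False
  then have "s3 \<noteq> 0" "s1 / s3 = of_int a / of_int c"
    using mobs by (auto simp: int_cusp_def proj_point_def split: if_splits)
  then show ?thesis using that[of "s3 / of_int c"] False by (auto simp: field_simps)
qed

lemma tau_in_stabilizer:
  assumes "scaling_matrix N z \<sigma>"
  shows "tau \<sigma> \<in> stabilizer N z"
proof -
  have "Tmat \<in> {(1, of_int n, 0, 1) | n. True} \<union> {(-1, - of_int n, 0, -1) | n. True}"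
    unfolding Tmat_def by (intro UnI1 CollectI exI[of _ 1]) simp
  then obtain \<gamma> where g: "\<gamma> \<in> stabilizer N z" "mmul (minv \<sigma>) (mmul \<gamma> \<sigma>) = Tmat"
    using assms unfolding scaling_matrix_def by (metis (no_types, lifting) imageE)
  have det: "mdet \<sigma> = 1" using assms by (simp add: scaling_matrix_def SL2R_def)
  have "tau \<sigma> = mmul \<sigma> (mmul (mmul (minv \<sigma>) (mmul \<gamma> \<sigma>)) (minv \<sigma>))"
    unfolding tau_def g(2) ..
  also have "\<dots> = mmul (mmul \<sigma> (minv \<sigma>)) (mmul \<gamma> (mmul \<sigma> (minv \<sigma>)))"
    by (simp add: mmul_assoc)
  also have "\<dots> = \<gamma>" using det by (simp add: mmul_minv)
  finally show ?thesis using g(1) by simp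
qed

text \<open>\<open>\<tau>\<close> lies in the stabilizer and has the shape \<open>1 + l\<^sup>2 (-ac, a\<^sup>2; -c\<^sup>2, ac)\<close>, where \<open>l (a, c)\<close>
  is the first column of \<open>\<sigma>\<close>; hence \<open>l\<^sup>2\<close> is a multiple of the width, and it is not a proper
  multiple because the parabolic element of the width itself is conjugated to an integral
  translation.\<close>
lemma tau_scaling_matrix:
  assumes N1: "N \<ge> 1" and ad: "a*d - b*c = 1" and sc: "scaling_matrix N (int_cusp a c) \<sigma>"
  shows "tau \<sigma> = parabolic a c 1 (cusp_width N c)"
proof -
  have cop: "coprime a c" using coprime_of_det[OF ad] .
  define h where "h = cusp_width N c"
  have h0: "h > 0" using cusp_width_pos[OF N1] h_def by simp
  obtain s1 s2 s3 s4 where \<sigma>: "\<sigma> = (s1,s2,s3,s4)" by (cases \<sigma>) auto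
  have det: "s1*s4 - s2*s3 = 1" and "mob (s1,s2,s3,s4) None = int_cusp a c"
    using sc \<sigma> by (simp_all add: scaling_matrix_def SL2R_def)
  then obtain l where l: "l \<noteq> 0" "s1 = l * of_int a" "s3 = l * of_int c"
    using mob_infinity_eq_int_cusp[OF cop] by blast
  obtain e n where en: "tau \<sigma> = parabolic a c e n" "e = 1 \<or> e = -1" "h dvd n"
    using tau_in_stabilizer[OF sc] unfolding stabilizer_int_cusp[OF N1 ad] h_def by blast
  have "tau \<sigma> = (1 - l^2 * of_int a * of_int c, l^2 * (of_int a)^2,
                  -(l^2 * (of_int c)^2), 1 + l^2 * of_int a * of_int c)"
    using tau_formula[OF det] unfolding \<sigma> l by (simp add: algebra_simps power2_eq_square)
  then have "l^2 * (of_int a)^2 = of_int n * (of_int a)^2" "l^2 * (of_int c)^2 = of_int n * (of_int c)^2"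
    and tau_l: "1 - l^2 * of_int a * of_int c = of_int e - of_int n * of_int a * of_int c"
    using en(1) unfolding parabolic_real by auto
  moreover have "a \<noteq> 0 \<or> c \<noteq> 0" using cop by auto
  ultimately have ln: "l^2 = of_int n" by auto
  with tau_l have "e = 1" by simp
  have "parabolic a c 1 h \<in> stabilizer N (int_cusp a c)"
    unfolding stabilizer_int_cusp[OF N1 ad] h_def by (intro CollectI exI[of _ 1] exI[of _ "cusp_width N c"]) simp
  then have "mmul (minv \<sigma>) (mmul (parabolic a c 1 h) \<sigma>) \<in>
      {(1, of_int n, 0, 1) | n. True} \<union> {(-1, - of_int n, 0, -1) | n. True}"
    using sc unfolding scaling_matrix_def by blast
  moreover have "mmul (minv \<sigma>) (mmul (parabolic a c 1 h) \<sigma>) = (1, of_int h / l^2, 0, 1)"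
    using conj_parabolic[of l a s2 c s4 1 h] det l unfolding \<sigma> by simp
  ultimately obtain m :: int where m: "of_int h / l^2 = of_int m" by auto
  have n0: "n > 0" using l ln by (metis of_int_0_less_iff zero_less_power2)
  then have "of_int h = (of_int (m * n) :: real)" using m ln by (simp add: field_simps)
  then have "n dvd h" by (simp only: of_int_eq_iff) simp
  then have "n = h" using en(3) n0 h0 by (simp add: zdvd_antisym_nonneg)
  then show ?thesis using en(1) \<open>e = 1\<close> h_def by simp
qed

lemma singular_int_cusp_iff:
  assumes N1: "N \<ge> 1" and cop: "coprime a c"
  shows "singular_cusp N \<psi> (int_cusp a c) \<longleftrightarrow> \<psi> (1 + cusp_width N c * a * c) = 1"
proof -
  obtain b d where ad: "a*d - b*c = 1" using det_of_coprime[OF cop] by blast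
  have "psi_mat \<psi> (parabolic a c 1 (cusp_width N c)) = \<psi> (1 + cusp_width N c * a * c)"
    unfolding psi_mat_def parabolic_def int_mat_def by (simp flip: of_int_mult)
  then show ?thesis
    using scaling_matrix_scaling_mat[OF N1 ad] tau_scaling_matrix[OF N1 ad]
    unfolding singular_cusp_def by metis
qed
section \<open>Characters on the progression \<open>1 + D t\<close>\<close>

lemma dirichlet_char_periodic:
  assumes dc: "dirichlet_char M \<chi>"
  shows "\<chi> (n + int M * k) = \<chi> n"
proof -
  have nat: "\<chi> (n + int M * int j) = \<chi> n" for n j
  proof (induction j)
    case (Suc j)
    have "\<chi> (n + int M * int (Suc j)) = \<chi> ((n + int M * int j) + int M)"
      by (simp add: algebra_simps)
    also have "\<dots> = \<chi> n" using dc Suc by (simp add: dirichlet_char_def)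
    finally show ?case .
  qed simp
  show ?thesis
  proof (cases "k \<ge> 0")
    case True
    then show ?thesis using nat[of n "nat k"] by simp
  next
    case False
    then have "(n + int M * k) + int M * int (nat (-k)) = n" by (simp add: algebra_simps)
    with nat[of "n + int M * k" "nat (-k)"] show ?thesis by metis
  qed
qed

lemma dirichlet_char_cong:
  assumes "dirichlet_char M \<chi>" "[m = n] (mod int M)"
  shows "\<chi> m = \<chi> n"
proof -
  obtain k where "n = m + int M * k" using assms(2) unfolding cong_iff_lin by blast
  then show ?thesis using dirichlet_char_periodic[OF assms(1)] by simp
qed

lemma dirichlet_char_one_plus_power:
  assumes dc: "dirichlet_char N \<psi>" and D: "int N dvd D * D"
  shows "\<psi> (1 + D * int t) = \<psi> (1 + D) ^ t"
proof (induction t)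
  case 0
  then show ?case using dc by (simp add: dirichlet_char_def)
next
  case (Suc t)
  have "(1 + D * int t) * (1 + D) - (1 + D * int (Suc t)) = (D * D) * int t"
    by (simp add: algebra_simps)
  then have "[(1 + D * int t) * (1 + D) = 1 + D * int (Suc t)] (mod int N)"
    using D unfolding cong_iff_dvd_diff by simp
  moreover have "\<psi> ((1 + D * int t) * (1 + D)) = \<psi> (1 + D * int t) * \<psi> (1 + D)"
    using dc by (simp add: dirichlet_char_def)
  ultimately have "\<psi> (1 + D * int (Suc t)) = \<psi> (1 + D * int t) * \<psi> (1 + D)"
    using dirichlet_char_cong[OF dc] by metis
  then show ?case using Suc by simp
qed

lemma dirichlet_char_one_plus_cong:
  assumes dc: "dirichlet_char N \<psi>" and ND: "int N = g * D" and t: "[t = t'] (mod g)"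
  shows "\<psi> (1 + D * t) = \<psi> (1 + D * t')"
proof (rule dirichlet_char_cong[OF dc])
  obtain k where "t - t' = g * k" using t unfolding cong_iff_dvd_diff by blast
  then have "(1 + D * t) - (1 + D * t') = int N * k" using ND by (simp add: algebra_simps)
  then show "[1 + D * t = 1 + D * t'] (mod int N)" unfolding cong_iff_dvd_diff by simp
qed

text \<open>Since \<open>N | D\<^sup>2\<close>, \<open>t \<mapsto> \<psi>(1 + D t)\<close> is a character of \<open>\<int>/g\<close>, so it is trivial as soon as it is
  trivial at a unit \<open>w\<close>: \<open>\<psi>(1 + D) = \<psi>(1 + D w)^w'\<close> for an inverse \<open>w'\<close> of \<open>w\<close>.\<close>
lemma dirichlet_char_one_plus_trivial:
  assumes dc: "dirichlet_char N \<psi>" and g0: "g > 0" and ND: "int N = g * D"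
    and NDD: "int N dvd D * D" and w: "coprime w g" and one: "\<psi> (1 + D * w) = 1"
  shows "\<psi> (1 + D * t) = 1"
proof -
  obtain w' where w': "[w * w' = 1] (mod g)" using cong_solve_coprime_int[OF w] by blast
  define w0 where "w0 = nat (w' mod g)"
  have "[w * int w0 = w * w'] (mod g)"
    unfolding w0_def using g0 by (simp add: cong_def mod_mult_right_eq)
  then have "[1 = w * int w0] (mod g)" using w' by (metis cong_sym cong_trans)
  have "int N dvd (D * w) * (D * w)"
    using NDD by (metis dvd_mult2 mult.assoc mult.commute mult.left_commute)
  have "\<psi> (1 + D) = \<psi> (1 + D * (w * int w0))"
    using dirichlet_char_one_plus_cong[OF dc ND \<open>[1 = w * int w0] (mod g)\<close>] by simp
  also have "\<dots> = \<psi> (1 + D * w) ^ w0"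
    using dirichlet_char_one_plus_power[OF dc \<open>int N dvd (D * w) * (D * w)\<close>, of w0]
    by (simp add: mult.assoc)
  finally have one': "\<psi> (1 + D) = 1" using one by simp
  have "[t = int (nat (t mod g))] (mod g)" using g0 by (simp add: cong_def)
  then have "\<psi> (1 + D * t) = \<psi> (1 + D * int (nat (t mod g)))"
    by (rule dirichlet_char_one_plus_cong[OF dc ND])
  also have "\<dots> = \<psi> (1 + D) ^ nat (t mod g)" by (rule dirichlet_char_one_plus_power[OF dc NDD])
  finally show ?thesis using one' by simp
qed

text \<open>If \<open>\<chi>\<close> is trivial on \<open>1 + D\<int>\<close>, then \<open>(M, D)\<close> is an induced modulus, because
  \<open>1 + (M, D)\<int> \<subseteq> 1 + D\<int> + M\<int>\<close>.\<close>
lemma primitive_char_modulus_dvd: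
  assumes prim: "primitive_char M \<chi>" and triv: "\<And>t. \<chi> (1 + D * t) = 1"
  shows "int M dvd D"
proof -
  have dc: "dirichlet_char M \<chi>" using prim by (simp add: primitive_char_def)
  then have M0: "M \<ge> 1" by (simp add: dirichlet_char_def)
  define d where "d = gcd (int M) D"
  have d0: "d > 0" using M0 by (simp add: d_def)
  obtain u v where uv: "u * int M + v * D = d" using bezout_int[of "int M" D] by (auto simp: d_def)
  have "\<chi> n = 1" if "[n = 1] (mod int (nat d))" for n
  proof -
    have "d dvd n - 1" using that d0 by (simp add: cong_iff_dvd_diff)
    then obtain k where "n - 1 = d * k" by blast
    then have "n + int M * (-(u * k)) = 1 + D * (v * k)"
      unfolding uv[symmetric] by (simp add: algebra_simps)
    then show ?thesis using dirichlet_char_periodic[OF dc, of n "-(u * k)"] triv by simp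
  qed
  moreover have "nat d dvd M" using d0 by (simp add: d_def nat_dvd_iff)
  ultimately have "\<not> nat d < M" using prim unfolding primitive_char_def by blast
  moreover have "nat d \<le> M" using \<open>nat d dvd M\<close> M0 by (simp add: dvd_imp_le)
  ultimately have "d = int M" using d0 by simp
  then show ?thesis unfolding d_def by (metis gcd_dvd2)
qed

lemma induced_char_one_plus_eq_one_iff:
  assumes dc: "dirichlet_char N \<psi>" and ind: "induced_by_primitive N \<psi> Nstar"
    and g0: "g > 0" and gg: "g * g dvd int N" and w: "coprime w g"
  shows "\<psi> (1 + (int N div g) * w) = 1 \<longleftrightarrow> int Nstar dvd int N div g"
proof -
  define D where "D = int N div g"
  have ND: "int N = g * D" using gg unfolding D_def by (metis dvd_mult_left dvd_mult_div_cancel)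
  then obtain j where "D = g * j" using gg g0 by (metis dvd_mult_cancel_left dvd_def less_irrefl)
  then have "D * D = int N * j" using ND by simp
  then have NDD: "int N dvd D * D" by simp
  have "coprime (1 + D * t) (int N)" for t
  proof -
    have "coprime D (1 + D * t)"
      using gcd_add_mult[of D t 1] by (simp add: coprime_iff_gcd_eq_1 ac_simps)
    then have "coprime (1 + D * t) (D * D)" by (simp add: coprime_commute)
    then show ?thesis using coprime_divisors[OF dvd_refl NDD] by blast
  qed
  moreover obtain \<chi> where \<chi>: "primitive_char Nstar \<chi>"
    "\<And>n. \<psi> n = (if coprime n (int N) then \<chi> n else 0)"
    using ind unfolding induced_by_primitive_def by blast
  ultimately have \<psi>\<chi>: "\<psi> (1 + D * t) = \<chi> (1 + D * t)" for t by simp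
  have dc\<chi>: "dirichlet_char Nstar \<chi>" using \<chi>(1) by (simp add: primitive_char_def)
  show ?thesis unfolding D_def[symmetric]
  proof
    assume "\<psi> (1 + D * w) = 1"
    then have "\<chi> (1 + D * t) = 1" for t
      using dirichlet_char_one_plus_trivial[OF dc g0 ND NDD w] \<psi>\<chi> by metis
    then show "int Nstar dvd D" by (rule primitive_char_modulus_dvd[OF \<chi>(1)])
  next
    assume "int Nstar dvd D"
    then obtain i where "D = int Nstar * i" ..
    then have "\<chi> (1 + D * w) = \<chi> 1"
      using dirichlet_char_periodic[OF dc\<chi>, of 1 "i * w"] by (simp add: mult.assoc)
    then show "\<psi> (1 + D * w) = 1" using \<psi>\<chi> dc\<chi> by (simp add: dirichlet_char_def)
  qed
qed

lemma coprimeI_primes: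
  fixes y F :: int
  assumes "F \<noteq> 0" and "\<And>p. prime p \<Longrightarrow> p dvd F \<Longrightarrow> p dvd y \<Longrightarrow> False"
  shows "coprime y F"
proof (rule coprimeI)
  fix k assume k: "k dvd y" "k dvd F"
  show "is_unit k"
  proof (rule ccontr)
    assume "\<not> is_unit k"
    moreover have "k \<noteq> 0" using k(2) assms(1) by auto
    ultimately obtain p where "prime p" "p dvd k" using prime_divisor_exists by blast
    then show False using assms(2) k by (meson dvd_trans)
  qed
qed

text \<open>Add to \<open>x\<close> the multiple of \<open>M\<close> by the product of the primes of \<open>F\<close> not dividing \<open>x\<close>.\<close>
lemma coprime_lift_mod:
  fixes x M F :: int
  assumes F: "F \<noteq> 0" and cop: "coprime x (gcd M F)"
  obtains y where "[y = x] (mod M)" "coprime y F"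
proof -
  define P where "P = {p \<in> prime_factors F. \<not> p dvd x}"
  have fin: "finite P" unfolding P_def by simp
  define y where "y = x + M * \<Prod>P"
  have "coprime y F"
  proof (rule coprimeI_primes[OF F])
    fix p assume p: "prime p" "p dvd F" "p dvd y"
    show False
    proof (cases "p dvd x")
      case True
      then have "\<not> p dvd M"
        using p(1,2) cop by (metis coprime_common_divisor gcd_greatest not_prime_unit)
      moreover have "\<not> p dvd \<Prod>P"
      proof
        assume "p dvd \<Prod>P"
        then obtain q where "q \<in> P" "p dvd q" using prime_dvd_prod_iff[OF fin p(1)] by auto
        then have "p = q" using p(1) primes_dvd_imp_eq[of p q] unfolding P_def
          by (auto simp: in_prime_factors_iff)
        then show False using True \<open>q \<in> P\<close> unfolding P_def by simp
      qed
      moreover have "p dvd M * \<Prod>P" using p(3) True unfolding y_def by (metis dvd_add_right_iff)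
      ultimately show False using prime_dvd_mult_iff[OF p(1)] by simp
    next
      case False
      then have "p \<in> P" unfolding P_def using p F by (simp add: in_prime_factors_iff)
      then have "p dvd \<Prod>P" using fin by (metis dvd_prod_eqI id_apply)
      then have "p dvd M * \<Prod>P" by simp
      then show False using False p(3) unfolding y_def by (metis dvd_add_left_iff)
    qed
  qed
  moreover have "[y = x] (mod M)" unfolding y_def cong_iff_dvd_diff by simp
  ultimately show ?thesis using that by blast
qed

section \<open>Invariants of cusp classes\<close>

definition cusp_divisor :: "nat \<Rightarrow> int \<Rightarrow> int" where
  "cusp_divisor N c = gcd c (int N)"

definition cusp_modulus :: "nat \<Rightarrow> int \<Rightarrow> int" where
  "cusp_modulus N c = gcd (cusp_divisor N c) (int N div cusp_divisor N c)"

text \<open>The residue of \<open>a c/f\<close> modulo \<open>g\<close>, normalised into \<open>{1..g}\<close> so that it is a totative of \<open>g\<close>.\<close>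
definition cusp_residue :: "nat \<Rightarrow> int \<Rightarrow> int \<Rightarrow> int" where
  "cusp_residue N a c = (a * (c div cusp_divisor N c) - 1) mod cusp_modulus N c + 1"

lemma cusp_divisor_pos: "N \<ge> 1 \<Longrightarrow> cusp_divisor N c > 0"
  by (simp add: cusp_divisor_def)

lemma cusp_divisor_dvd: "cusp_divisor N c dvd c" "cusp_divisor N c dvd int N"
  by (simp_all add: cusp_divisor_def)

lemma coprime_cusp_quotients:
  "N \<ge> 1 \<Longrightarrow> coprime (c div cusp_divisor N c) (int N div cusp_divisor N c)"
  unfolding cusp_divisor_def by (rule div_gcd_coprime) auto

lemma cusp_modulus_pos: "N \<ge> 1 \<Longrightarrow> cusp_modulus N c > 0"
  using cusp_divisor_pos[of N c] by (simp add: cusp_modulus_def)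

lemma cusp_modulus_dvd:
  "cusp_modulus N c dvd cusp_divisor N c" "cusp_modulus N c dvd int N div cusp_divisor N c"
  by (simp_all add: cusp_modulus_def)

lemma cusp_modulus_sq_dvd: "cusp_modulus N c * cusp_modulus N c dvd int N"
  using mult_dvd_mono[OF cusp_modulus_dvd(1)[of N c] cusp_modulus_dvd(2)[of N c]]
    cusp_divisor_dvd(2)[of N c] by simp

lemma coprime_cusp_residue_base:
  assumes N1: "N \<ge> 1" and cop: "coprime a c"
  shows "coprime (a * (c div cusp_divisor N c)) (cusp_modulus N c)"
proof -
  have "coprime a (cusp_divisor N c)"
    using coprime_divisors[OF dvd_refl cusp_divisor_dvd(1) cop] .
  then have "coprime a (cusp_modulus N c)"
    using coprime_divisors[OF dvd_refl cusp_modulus_dvd(1)] by blast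
  moreover have "coprime (c div cusp_divisor N c) (cusp_modulus N c)"
    using coprime_divisors[OF dvd_refl cusp_modulus_dvd(2) coprime_cusp_quotients[OF N1]] .
  ultimately show ?thesis by simp
qed

lemma cusp_width_mult_eq:
  assumes N1: "N \<ge> 1"
  shows "cusp_width N c * c = (int N div cusp_modulus N c) * (c div cusp_divisor N c)"
proof -
  define f where "f = cusp_divisor N c"
  define g where "g = cusp_modulus N c"
  define c1 where "c1 = c div f"
  define N1 where "N1 = int N div f"
  have f0: "f > 0" and g0: "g > 0" using cusp_divisor_pos[OF N1] cusp_modulus_pos[OF N1]
    by (simp_all add: f_def g_def)
  have c: "c = f * c1" and NN: "int N = f * N1"
    using cusp_divisor_dvd[of N c] by (simp_all add: c1_def N1_def f_def)
  have cop: "coprime c1 N1" using coprime_cusp_quotients[OF N1] by (simp add: c1_def N1_def f_def)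
  have g: "g = gcd f N1" by (simp add: g_def cusp_modulus_def f_def N1_def)
  obtain k where k: "N1 = g * k" using g by (metis gcd_dvd2 dvd_def)
  have "gcd (c^2) (int N) = f * gcd (f * c1^2) N1"
    unfolding c NN using gcd_mult_distrib_int[of f "f * c1^2" N1] f0
    by (simp add: power2_eq_square algebra_simps)
  also have "gcd (f * c1^2) N1 = g"
    using gcd_mult_left_right_cancel[of N1 "c1^2" f] cop g by (simp add: coprime_commute)
  finally have "cusp_width N c = k"
    unfolding cusp_width_def using NN k f0 g0 by simp
  moreover have "int N div g = f * k" using NN k g0 by simp
  ultimately show ?thesis unfolding g_def[symmetric] f_def[symmetric] c1_def[symmetric]
    using c by (simp add: algebra_simps)
qed

lemma singular_int_cusp_iff_modulus:
  assumes N1: "N \<ge> 1" and dc: "dirichlet_char N \<psi>" and ind: "induced_by_primitive N \<psi> Nstar"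
    and cop: "coprime a c"
  shows "singular_cusp N \<psi> (int_cusp a c) \<longleftrightarrow> int Nstar dvd int N div cusp_modulus N c"
proof -
  have "cusp_width N c * a * c = (int N div cusp_modulus N c) * (a * (c div cusp_divisor N c))"
    using cusp_width_mult_eq[OF N1, of c] by (metis mult.assoc mult.left_commute)
  then show ?thesis unfolding singular_int_cusp_iff[OF N1 cop]
    by (simp only: induced_char_one_plus_eq_one_iff[OF dc ind
        cusp_modulus_pos[OF N1] cusp_modulus_sq_dvd coprime_cusp_residue_base[OF N1 cop]])
qed

lemma cusp_invariants_Gamma0:
  fixes p q r s a c :: int
  assumes N1: "N \<ge> 1" and det: "p*s - q*r = 1" and rN: "int N dvd r"
  shows "cusp_divisor N (r*a + s*c) = cusp_divisor N c"
    "cusp_residue N (p*a + q*c) (r*a + s*c) = cusp_residue N a c"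
proof -
  obtain t where t: "r = int N * t" using rN by blast
  have "s*p - (q*t) * int N = 1" using det t by (simp add: algebra_simps)
  then have "coprime (int N) s" using coprime_of_det coprime_commute by blast
  have "gcd (r*a + s*c) (int N) = gcd (int N) ((t*a) * int N + c*s)"
    using t by (simp add: algebra_simps gcd.commute)
  also have "\<dots> = gcd (int N) (c*s)" by (rule gcd_add_mult)
  also have "\<dots> = gcd (int N) c" using gcd_mult_right_right_cancel[OF \<open>coprime (int N) s\<close>] .
  finally show ff: "cusp_divisor N (r*a + s*c) = cusp_divisor N c"
    by (simp add: cusp_divisor_def gcd.commute)
  define f where "f = cusp_divisor N c"
  define g where "g = cusp_modulus N c"
  define c1 where "c1 = c div f"
  define N1 where "N1 = int N div f"
  have f0: "f > 0" using cusp_divisor_pos[OF N1] f_def by simp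
  have c: "c = f * c1" and NN: "int N = f * N1"
    using cusp_divisor_dvd[of N c] by (simp_all add: c1_def N1_def f_def)
  have gf: "g dvd f" "g dvd N1" using cusp_modulus_dvd[of N c] by (simp_all add: g_def f_def N1_def)
  define c1' where "c1' = N1*t*a + s*c1"
  have "r*a + s*c = f * c1'" unfolding c1'_def using t NN c by (simp add: algebra_simps)
  then have c1'd: "(r*a + s*c) div f = c1'" using f0 by simp
  have gg: "cusp_modulus N (r*a + s*c) = g" unfolding cusp_modulus_def g_def ff ..
  have ps: "p*s = 1 + q*f*N1*t" using det t NN by (simp add: algebra_simps)
  have "(p*a + q*c)*c1' - a*c1 = N1*(p*a*a*t + q*f*t*a*c1) + f*(q*c1*c1')"
  proof -
    have "(p*a + q*c)*c1' - a*c1 = N1*(p*a*a*t) + (p*s)*(a*c1) + q*c*c1' - a*c1"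
      unfolding c1'_def by (simp add: algebra_simps)
    also have "\<dots> = N1*(p*a*a*t + q*f*t*a*c1) + f*(q*c1*c1')" unfolding ps c by (simp add: algebra_simps)
    finally show ?thesis .
  qed
  then have "g dvd (p*a + q*c)*c1' - a*c1" using gf by simp
  then have "((p*a + q*c)*c1' - 1) mod g = (a*c1 - 1) mod g" by (simp add: mod_eq_dvd_iff)
  then show "cusp_residue N (p*a + q*c) (r*a + s*c) = cusp_residue N a c"
    unfolding cusp_residue_def gg ff f_def[symmetric] g_def[symmetric] c1'd c1_def[symmetric] by simp
qed

lemma cusp_invariants_uminus:
  assumes N1: "N \<ge> 1"
  shows "cusp_divisor N (-c) = cusp_divisor N c" "cusp_residue N (-a) (-c) = cusp_residue N a c"
proof -
  show f: "cusp_divisor N (-c) = cusp_divisor N c" by (simp add: cusp_divisor_def)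
  have "-c = cusp_divisor N c * (-(c div cusp_divisor N c))"
    using cusp_divisor_dvd(1)[of N c] by simp
  then have "(-c) div cusp_divisor N c = -(c div cusp_divisor N c)"
    using cusp_divisor_pos[OF N1, of c] by (metis nonzero_mult_div_cancel_left less_irrefl)
  then show "cusp_residue N (-a) (-c) = cusp_residue N a c"
    unfolding cusp_residue_def cusp_modulus_def f by simp
qed

lemma cusp_invariants_of_equiv:
  assumes N1: "N \<ge> 1" and cop: "coprime a c" and cop': "coprime a' c'"
    and eq: "cusp_equiv N (int_cusp a c) (int_cusp a' c')"
  shows "cusp_divisor N c' = cusp_divisor N c \<and> cusp_residue N a' c' = cusp_residue N a c"
proof -
  obtain \<gamma> where g: "\<gamma> \<in> Gamma0 N" "mob \<gamma> (int_cusp a c) = int_cusp a' c'"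
    using eq unfolding cusp_equiv_def by blast
  obtain p q r s where gp: "\<gamma> = int_mat p q r s" "p*s - q*r = 1" "int N dvd r"
    using g(1) by (rule Gamma0_E)
  have "a \<noteq> 0 \<or> c \<noteq> 0" using cop by auto
  then have "int_cusp (p*a + q*c) (r*a + s*c) = int_cusp a' c'" using g(2) gp(1) mob_int_cusp by simp
  then have "(a' = p*a + q*c \<and> c' = r*a + s*c) \<or> (a' = -(p*a + q*c) \<and> c' = -(r*a + s*c))"
    using int_cusp_eq[OF coprime_mat_image[OF gp(2) cop] cop'] by blast
  moreover note G = cusp_invariants_Gamma0[OF N1 gp(2,3), of a c]
  moreover note cusp_invariants_uminus(1)[OF N1, where c = "r*a + s*c"]
    cusp_invariants_uminus(2)[OF N1, where a = "p*a + q*c" and c = "r*a + s*c"]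
  ultimately show ?thesis by (elim disjE conjE) (simp_all only:)
qed

section \<open>Equivalence of cusps with equal invariants\<close>

text \<open>The witness is \<open>(a', a'm + b'; c', c'm + d') (a, b; c, d)\<^sup>-\<^sup>1\<close>; its lower left entry is
  \<open>c'd - cd' - cc'm\<close>.\<close>
lemma cusp_equiv_int_cuspI:
  fixes a b c d a' b' c' d' m :: int
  assumes ad: "a*d - b*c = 1" and ad': "a'*d' - b'*c' = 1"
    and dv: "int N dvd c'*d - c*d' - c*c'*m"
  shows "cusp_equiv N (int_cusp a c) (int_cusp a' c')"
proof -
  define p where "p = a'*d - (a'*m + b')*c"
  define q where "q = -(a'*b) + (a'*m + b')*a"
  define r where "r = c'*d - (c'*m + d')*c"
  define s where "s = -(c'*b) + (c'*m + d')*a"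
  have "p*s - q*r = (a'*d' - b'*c')*(a*d - b*c)"
    unfolding p_def q_def r_def s_def by (simp add: algebra_simps)
  then have det: "p*s - q*r = 1" using ad ad' by simp
  have "r = c'*d - c*d' - c*c'*m" unfolding r_def by (simp add: algebra_simps)
  then have G: "int_mat p q r s \<in> Gamma0 N" using Gamma0_int_mat[OF det] dv by simp
  have e1: "p*a + q*c = a'*(a*d - b*c)" and e2: "r*a + s*c = c'*(a*d - b*c)"
    unfolding p_def q_def r_def s_def by (simp_all add: algebra_simps)
  have "a \<noteq> 0 \<or> c \<noteq> 0" using coprime_of_det[OF ad] by auto
  then have "mob (int_mat p q r s) (int_cusp a c) = int_cusp a' c'"
    using mob_int_cusp e1 e2 ad by simp
  then show ?thesis unfolding cusp_equiv_def using G by blast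
qed

lemma cusp_equiv_divisor_denominator:
  assumes N1: "N \<ge> 1" and cop: "coprime a c"
  obtains a1 where "coprime a1 (cusp_divisor N c)"
    "cusp_equiv N (int_cusp a c) (int_cusp a1 (cusp_divisor N c))"
proof -
  define f where "f = cusp_divisor N c"
  define c1 where "c1 = c div f"
  define N1 where "N1 = int N div f"
  have f0: "f > 0" using cusp_divisor_pos[OF N1] f_def by simp
  have c: "c = f * c1" and NN: "int N = f * N1"
    using cusp_divisor_dvd[of N c] by (simp_all add: c1_def N1_def f_def)
  have cop1: "coprime c1 N1" using coprime_cusp_quotients[OF N1] by (simp add: c1_def N1_def f_def)
  obtain b d where ad: "a*d - b*c = 1" using det_of_coprime[OF cop] by blast
  obtain c1i where "[c1 * c1i = 1] (mod N1)" using cong_solve_coprime_int[OF cop1] by blast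
  then obtain j where j: "c1 * c1i - 1 = N1 * j" unfolding cong_iff_dvd_diff by (meson dvd_def)
  then have "c1i * c1 - j * N1 = 1" by (simp add: algebra_simps)
  then have "coprime c1i N1" by (rule coprime_of_det)
  then have "coprime c1i (gcd N1 f)" using coprime_divisors[OF dvd_refl gcd_dvd1] by blast
  moreover have "d*a - (b*c1)*f = 1" using ad c by (simp add: algebra_simps)
  then have "coprime d f" by (rule coprime_of_det)
  then have "coprime d (gcd N1 f)" using coprime_divisors[OF dvd_refl gcd_dvd2] by blast
  ultimately have "coprime (c1i * d) (gcd N1 f)" by simp
  then obtain d' where d': "[d' = c1i * d] (mod N1)" "coprime d' f"
    using coprime_lift_mod[of f "c1i * d" N1] f0 by auto
  obtain a1 b1 where "d'*a1 - b1*f = 1" using det_of_coprime[OF d'(2)] by blast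
  then have ad1: "a1*d' - b1*f = 1" by (simp add: algebra_simps)
  obtain k where k: "d' - c1i * d = N1 * k" using d'(1) unfolding cong_iff_dvd_diff by (meson dvd_def)
  have "f*d - c*d' - c*f*0 = f * (-(d*(c1*c1i - 1)) - c1*(d' - c1i*d))"
    using c by (simp add: algebra_simps)
  also have "\<dots> = int N * (-(d*j) - c1*k)" unfolding j k NN by (simp add: algebra_simps)
  finally have "int N dvd f*d - c*d' - c*f*0" by simp
  then have "cusp_equiv N (int_cusp a c) (int_cusp a1 f)" by (rule cusp_equiv_int_cuspI[OF ad ad1])
  then show ?thesis using that coprime_of_det[OF ad1] f_def by blast
qed

lemma cusp_equiv_same_denominator:
  fixes a1 a2 f :: int
  assumes fN: "f dvd int N" and c1: "coprime a1 f" and c2: "coprime a2 f"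
    and cg: "[a1 = a2] (mod gcd f (int N div f))"
  shows "cusp_equiv N (int_cusp a1 f) (int_cusp a2 f)"
proof -
  define N1 where "N1 = int N div f"
  define g where "g = gcd f N1"
  have NN: "int N = f * N1" using fN by (simp add: N1_def)
  obtain b1 d1 where ad1: "a1*d1 - b1*f = 1" using det_of_coprime[OF c1] by blast
  obtain b2 d2 where ad2: "a2*d2 - b2*f = 1" using det_of_coprime[OF c2] by blast
  have gf: "g dvd f" unfolding g_def by simp
  have cg1: "coprime a1 g" using coprime_divisors[OF dvd_refl gf c1] .
  obtain e where e: "a1 - a2 = g * e" using cg unfolding cong_iff_dvd_diff g_def N1_def by (meson dvd_def)
  have "a1*(d1 - d2) = (a1*d1 - b1*f) - (a2*d2 - b2*f) - (a1 - a2)*d2 + (b1 - b2)*f"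
    by (simp add: algebra_simps)
  also have "\<dots> = g * (-(e*d2)) + (b1 - b2)*f" unfolding ad1 ad2 e by (simp add: algebra_simps)
  finally have "a1*(d1 - d2) = g * (-(e*d2)) + (b1 - b2)*f" .
  moreover have "g dvd g * (-(e*d2)) + (b1 - b2)*f" using gf by simp
  ultimately have "g dvd a1*(d1 - d2)" by simp
  then obtain k where k: "d1 - d2 = g * k"
    using cg1 by (metis coprime_commute coprime_dvd_mult_right_iff dvdE)
  obtain u v where uv: "u*f + v*N1 = g" using bezout_int[of f N1] g_def by blast
  have "f*d1 - f*d2 - f*f*(u*k) = f * ((u*f + v*N1)*k - f*(u*k))"
    unfolding uv k[symmetric] by (simp add: algebra_simps)
  also have "\<dots> = int N * (v*k)" unfolding NN by (simp add: algebra_simps)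
  finally have "int N dvd f*d1 - f*d2 - f*f*(u*k)" by simp
  then show ?thesis by (rule cusp_equiv_int_cuspI[OF ad1 ad2])
qed

lemma cusp_equiv_if_invariants_eq:
  assumes N1: "N \<ge> 1" and cop: "coprime a c" and cop': "coprime a' c'"
    and ff: "cusp_divisor N c' = cusp_divisor N c" and uu: "cusp_residue N a' c' = cusp_residue N a c"
  shows "cusp_equiv N (int_cusp a c) (int_cusp a' c')"
proof -
  define f where "f = cusp_divisor N c"
  obtain a1 where A1: "coprime a1 f" "cusp_equiv N (int_cusp a c) (int_cusp a1 f)"
    using cusp_equiv_divisor_denominator[OF N1 cop] f_def by blast
  obtain a2 where A2: "coprime a2 f" "cusp_equiv N (int_cusp a' c') (int_cusp a2 f)"
    using cusp_equiv_divisor_denominator[OF N1 cop'] ff f_def by metis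
  have f0: "f > 0" using cusp_divisor_pos[OF N1] f_def by simp
  have I1: "cusp_divisor N f = f \<and> cusp_residue N a1 f = cusp_residue N a c"
    using cusp_invariants_of_equiv[OF N1 cop A1] f_def by simp
  have I2: "cusp_residue N a2 f = cusp_residue N a' c'"
    using cusp_invariants_of_equiv[OF N1 cop' A2] by simp
  define g where "g = gcd f (int N div f)"
  have "cusp_modulus N f = g" unfolding cusp_modulus_def g_def using I1 by simp
  then have "cusp_residue N x f = (x - 1) mod g + 1" for x
    unfolding cusp_residue_def using I1 f0 by simp
  then have "(a1 - 1) mod g = (a2 - 1) mod g" using I1 I2 uu by simp
  then have "[a1 = a2] (mod g)" by (simp add: cong_iff_dvd_diff mod_eq_dvd_iff)
  then have "cusp_equiv N (int_cusp a1 f) (int_cusp a2 f)"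
    using cusp_equiv_same_denominator[OF _ A1(1) A2(1)] cusp_divisor_dvd(2) f_def g_def by simp
  then show ?thesis using A1(2) A2(2) cusp_equiv_sym cusp_equiv_trans by blast
qed

section \<open>Counting the singular classes\<close>

lemma cusp_divisor_of_nat: "f dvd N \<Longrightarrow> cusp_divisor N (int f) = int f"
  by (simp add: cusp_divisor_def gcd_nat.absorb1)

lemma cusp_modulus_eq_of_divisor:
  "cusp_divisor N c = int f \<Longrightarrow> cusp_modulus N c = int (gcd f (N div f))"
  by (simp add: cusp_modulus_def flip: zdiv_int)

lemma int_dvd_div_iff_dvd_div:
  fixes N g Nstar :: nat
  assumes "g > 0" "g dvd N" "Nstar > 0" "Nstar dvd N"
  shows "int Nstar dvd int N div int g \<longleftrightarrow> g dvd N div Nstar"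
proof -
  have "int Nstar dvd int N div int g \<longleftrightarrow> Nstar * g dvd N"
    using assms by (simp add: dvd_div_iff_mult flip: zdiv_int)
  also have "\<dots> \<longleftrightarrow> g dvd N div Nstar" using assms by (simp add: dvd_div_iff_mult mult.commute)
  finally show ?thesis .
qed

lemma singular_int_cusp_iff_dvd:
  assumes N1: "N \<ge> 1" and dc: "dirichlet_char N \<psi>" and ind: "induced_by_primitive N \<psi> Nstar"
    and cop: "coprime a c" and g: "cusp_modulus N c = int g"
  shows "singular_cusp N \<psi> (int_cusp a c) \<longleftrightarrow> g dvd N div Nstar"
proof -
  obtain \<chi> where "primitive_char Nstar \<chi>" and NsN: "Nstar dvd N"
    using ind unfolding induced_by_primitive_def by blast
  then have "Nstar > 0" by (simp add: primitive_char_def dirichlet_char_def)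
  moreover have "g > 0" using cusp_modulus_pos[OF N1, of c] g by simp
  moreover have "int g dvd int N" using cusp_modulus_sq_dvd[of N c] g dvd_mult_left by metis
  then have "g dvd N" by simp
  ultimately show ?thesis
    using singular_int_cusp_iff_modulus[OF N1 dc ind cop] int_dvd_div_iff_dvd_div NsN g by simp
qed

definition cusp_rep_numerator :: "nat \<Rightarrow> nat \<Rightarrow> nat \<Rightarrow> int" where
  "cusp_rep_numerator N f u =
     (SOME a. [a = int u] (mod int (gcd f (N div f))) \<and> coprime a (int f))"

definition cusp_rep :: "nat \<Rightarrow> nat \<Rightarrow> nat \<Rightarrow> real option" where
  "cusp_rep N f u = int_cusp (cusp_rep_numerator N f u) (int f)"

lemma cusp_rep_numerator:
  assumes "f dvd N" "N \<ge> 1" and u: "u \<in> totatives (gcd f (N div f))"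
  shows "[cusp_rep_numerator N f u = int u] (mod int (gcd f (N div f)))"
    "coprime (cusp_rep_numerator N f u) (int f)"
proof -
  have "f > 0" using assms by (cases f) auto
  have "gcd (int (gcd f (N div f))) (int f) = int (gcd f (N div f))"
    by (metis gcd_int_int_eq gcd_nat.absorb1 gcd_dvd1)
  then have cop: "coprime (int u) (gcd (int (gcd f (N div f))) (int f))"
    using u by (simp add: in_totatives_iff)
  have "int f \<noteq> 0" using \<open>f > 0\<close> by simp
  then obtain y where "[y = int u] (mod int (gcd f (N div f)))" "coprime y (int f)"
    using cop by (rule coprime_lift_mod)
  then have "\<exists>a. [a = int u] (mod int (gcd f (N div f))) \<and> coprime a (int f)" by blast
  then show "[cusp_rep_numerator N f u = int u] (mod int (gcd f (N div f)))"
    "coprime (cusp_rep_numerator N f u) (int f)"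
    unfolding cusp_rep_numerator_def by (metis (mono_tags, lifting) someI_ex)+
qed

lemma cusp_residue_cusp_rep_numerator:
  assumes f: "f dvd N" "N \<ge> 1" and u: "u \<in> totatives (gcd f (N div f))"
  shows "cusp_residue N (cusp_rep_numerator N f u) (int f) = int u"
proof -
  define g where "g = gcd f (N div f)"
  have "f > 0" using f by (cases f) auto
  have "u > 0" "u \<le> g" using u g_def by (auto simp: in_totatives_iff)
  have "(cusp_rep_numerator N f u - 1) mod int g = (int u - 1) mod int g"
    using cusp_rep_numerator(1)[OF f u] unfolding g_def[symmetric] cong_def
    by (metis mod_diff_left_eq)
  also have "\<dots> = int u - 1" using \<open>u > 0\<close> \<open>u \<le> g\<close> by simp
  finally show ?thesis
    unfolding cusp_residue_def cusp_modulus_eq_of_divisor[OF cusp_divisor_of_nat[OF f(1)]]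
      cusp_divisor_of_nat[OF f(1)] using \<open>f > 0\<close> g_def by simp
qed

lemma cusp_residue_bounds:
  assumes N1: "N \<ge> 1" and cop: "coprime a c"
  shows "0 < cusp_residue N a c" "cusp_residue N a c \<le> cusp_modulus N c"
    "coprime (cusp_residue N a c) (cusp_modulus N c)"
proof -
  define g where "g = cusp_modulus N c"
  define x where "x = a * (c div cusp_divisor N c)"
  have g0: "g > 0" using cusp_modulus_pos[OF N1] g_def by simp
  have r: "cusp_residue N a c = (x - 1) mod g + 1" unfolding cusp_residue_def x_def g_def ..
  show "0 < cusp_residue N a c" "cusp_residue N a c \<le> cusp_modulus N c"
    unfolding r g_def[symmetric] using pos_mod_bound[OF g0, of "x - 1"] pos_mod_sign[OF g0, of "x - 1"]
    by linarith+
  have "cusp_residue N a c = (-((x - 1) div g)) * g + x"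
    unfolding r using div_mult_mod_eq[of "x - 1" g] by (simp add: algebra_simps)
  then have "gcd g (cusp_residue N a c) = gcd g x" by (simp only: gcd_add_mult)
  moreover have "coprime x g" using coprime_cusp_residue_base[OF N1 cop] x_def g_def by simp
  ultimately show "coprime (cusp_residue N a c) (cusp_modulus N c)"
    by (simp add: coprime_iff_gcd_eq_1 gcd.commute g_def)
qed

lemma cusp_equiv_cusp_rep:
  assumes N1: "N \<ge> 1" and cop: "coprime a c"
  obtains f u where "f dvd N" "u \<in> totatives (gcd f (N div f))"
    "cusp_modulus N c = int (gcd f (N div f))" "cusp_equiv N (int_cusp a c) (cusp_rep N f u)"
proof -
  define f where "f = nat (cusp_divisor N c)"
  define u where "u = nat (cusp_residue N a c)"
  have fi: "int f = cusp_divisor N c" using cusp_divisor_pos[OF N1, of c] f_def by simp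
  then have "int f dvd int N" using cusp_divisor_dvd(2)[of N c] by simp
  then have fN: "f dvd N" by simp
  have gi: "cusp_modulus N c = int (gcd f (N div f))"
    using cusp_modulus_eq_of_divisor fi by simp
  have ui: "int u = cusp_residue N a c" using cusp_residue_bounds(1)[OF N1 cop] u_def by simp
  define g where "g = gcd f (N div f)"
  have "0 < int u" "int u \<le> int g" "coprime (int u) (int g)"
    using cusp_residue_bounds[OF N1 cop] unfolding ui[symmetric] gi g_def[symmetric] by auto
  then have uT: "u \<in> totatives (gcd f (N div f))" by (simp add: in_totatives_iff g_def)
  note rep = cusp_rep_numerator[OF fN N1 uT]
  have "cusp_equiv N (int_cusp a c) (cusp_rep N f u)"
    unfolding cusp_rep_def
    using cusp_equiv_if_invariants_eq[OF N1 cop rep(2)] cusp_divisor_of_nat[OF fN] fi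
      cusp_residue_cusp_rep_numerator[OF fN N1 uT] ui by simp
  then show ?thesis using that fN uT gi by blast
qed

lemma singular_cusp_classes_eq_image:
  assumes N1: "N \<ge> 1" and dc: "dirichlet_char N \<psi>" and ind: "induced_by_primitive N \<psi> Nstar"
  shows "singular_cusp_classes N \<psi> = (\<lambda>(f, u). {w. cusp_equiv N (cusp_rep N f u) w}) `
    (SIGMA f:{f. f dvd N \<and> gcd f (N div f) dvd N div Nstar}. totatives (gcd f (N div f)))"
proof (intro equalityI subsetI)
  fix X assume "X \<in> singular_cusp_classes N \<psi>"
  then obtain z where z: "X = {w. cusp_equiv N z w}" "is_cusp z" "singular_cusp N \<psi> z"
    unfolding singular_cusp_classes_def by blast
  obtain a c where ac: "coprime a c" "z = int_cusp a c" using z(2) by (rule is_cusp_E)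
  obtain f u where fu: "f dvd N" "u \<in> totatives (gcd f (N div f))"
    "cusp_modulus N c = int (gcd f (N div f))" "cusp_equiv N z (cusp_rep N f u)"
    using cusp_equiv_cusp_rep[OF N1 ac(1)] ac(2) by metis
  have "gcd f (N div f) dvd N div Nstar"
    using singular_int_cusp_iff_dvd[OF N1 dc ind ac(1) fu(3)] z(3) ac(2) by simp
  moreover have "X = {w. cusp_equiv N (cusp_rep N f u) w}" using z(1) cusp_class_eq[OF fu(4)] by simp
  ultimately show "X \<in> (\<lambda>(f, u). {w. cusp_equiv N (cusp_rep N f u) w}) `
      (SIGMA f:{f. f dvd N \<and> gcd f (N div f) dvd N div Nstar}. totatives (gcd f (N div f)))"
    using fu(1,2) by (intro image_eqI[of _ _ "(f, u)"]) auto
next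
  fix X assume "X \<in> (\<lambda>(f, u). {w. cusp_equiv N (cusp_rep N f u) w}) `
      (SIGMA f:{f. f dvd N \<and> gcd f (N div f) dvd N div Nstar}. totatives (gcd f (N div f)))"
  then obtain f u where fu: "f dvd N" "gcd f (N div f) dvd N div Nstar"
    "u \<in> totatives (gcd f (N div f))" "X = {w. cusp_equiv N (cusp_rep N f u) w}"
    by auto
  have "singular_cusp N \<psi> (cusp_rep N f u)"
    unfolding cusp_rep_def
    using singular_int_cusp_iff_dvd[OF N1 dc ind cusp_rep_numerator(2)[OF fu(1) N1 fu(3)]
        cusp_modulus_eq_of_divisor[OF cusp_divisor_of_nat[OF fu(1)]]] fu(2) by simp
  moreover have "is_cusp (cusp_rep N f u)" unfolding cusp_rep_def by (rule is_cusp_int_cusp)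
  ultimately show "X \<in> singular_cusp_classes N \<psi>"
    unfolding singular_cusp_classes_def using fu(4) by blast
qed

lemma inj_on_cusp_rep_class:
  assumes N1: "N \<ge> 1"
  shows "inj_on (\<lambda>(f, u). {w. cusp_equiv N (cusp_rep N f u) w})
    (SIGMA f:{f. f dvd N}. totatives (gcd f (N div f)))"
proof (rule inj_onI, clarsimp)
  fix f u f' u'
  assume f: "f dvd N" "u \<in> totatives (gcd f (N div f))"
    and f': "f' dvd N" "u' \<in> totatives (gcd f' (N div f'))"
    and eq: "{w. cusp_equiv N (cusp_rep N f u) w} = {w. cusp_equiv N (cusp_rep N f' u') w}"
  have "cusp_equiv N (cusp_rep N f u) (cusp_rep N f' u')" using eq cusp_equiv_refl by blast
  then have "cusp_divisor N (int f') = cusp_divisor N (int f) \<and>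
      cusp_residue N (cusp_rep_numerator N f' u') (int f') = cusp_residue N (cusp_rep_numerator N f u) (int f)"
    unfolding cusp_rep_def
    by (rule cusp_invariants_of_equiv[OF N1 cusp_rep_numerator(2)[OF f(1) N1 f(2)]
          cusp_rep_numerator(2)[OF f'(1) N1 f'(2)]])
  then show "f = f' \<and> u = u'"
    using cusp_divisor_of_nat[OF f(1)] cusp_divisor_of_nat[OF f'(1)]
      cusp_residue_cusp_rep_numerator[OF f(1) N1 f(2)] cusp_residue_cusp_rep_numerator[OF f'(1) N1 f'(2)]
    by simp
qed

theorem corollary5p5:
  fixes N Nstar :: nat and k :: int and \<psi> :: "int \<Rightarrow> complex"
  assumes "N \<ge> 1"
    and "dirichlet_char N \<psi>"
    and "\<psi> (-1) = (-1) powi k"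
    and "induced_by_primitive N \<psi> Nstar"
  shows "card (singular_cusp_classes N \<psi>) =
         (\<Sum>f | f dvd N \<and> gcd f (N div f) dvd (N div Nstar). totient (gcd f (N div f)))"
proof -
  define F where "F = {f. f dvd N \<and> gcd f (N div f) dvd N div Nstar}"
  have "finite F" unfolding F_def using \<open>N \<ge> 1\<close> by (auto intro: finite_subset[OF _ finite_divisors_nat])
  have "inj_on (\<lambda>(f, u). {w. cusp_equiv N (cusp_rep N f u) w}) (SIGMA f:F. totatives (gcd f (N div f)))"
    using inj_on_cusp_rep_class[OF \<open>N \<ge> 1\<close>] by (rule inj_on_subset) (auto simp: F_def)
  then have "card (singular_cusp_classes N \<psi>) = card (SIGMA f:F. totatives (gcd f (N div f)))"
    unfolding singular_cusp_classes_eq_image[OF assms(1,2,4)] F_def[symmetric] by (rule card_image)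
  also have "\<dots> = (\<Sum>f\<in>F. totient (gcd f (N div f)))"
    using \<open>finite F\<close> by (simp add: totient_def)
  finally show ?thesis unfolding F_def .
qed

end
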